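(* Let $|V|,S,p,d,d_w$ be positive integers. Let $C\in\mathbb{R}^{(|V|+1)\times p}$ be a token-embedding matrix whose $i$-th row is $c_i^\top$, where index $|V|+1$ is the \texttt{[MASK]} token, and let $P\in\mathbb{R}^{S\times p}$ be a positional-encoding matrix. Let $W^V\in\mathbb{R}^{d\times p}$, $W^Q,W^K\in\mathbb{R}^{d_w\times p}$, $W^O\in\mathbb{R}^{d\times p}$, $W'\in\mathbb{R}^{p\times p}$, $W''\in\mathbb{R}^{|V|\times p}$. For a masked sentence given by a matrix $\overline{X}\in\{0,1\}^{S\times(|V|+1)}$ whose rows are one-hot vectors, with masked position $m\in[S]$ (so the $m$-th row of $\overline{X}$ is the one-hot vector of index $|V|+1$) and masked (target) token $b\in[|V|]$, define the single-head single-layer attention model: $X'=\overline{X}C+P$; $X^{\mathrm{attn}}=\mathrm{softmax}\big(X'(W^Q)^\top W^K(X')^\top/\sqrt{d_w}\big)X'(W^V)^\top$ (softmax taken row-wise); $Z=X^{\mathrm{attn}}W^O$; $Z'=X'+Z$; $Z''=Z'+Z'(W')^\top$ (i.e. each row $Z'_i$ is mapped to $Z'_i+W'Z'_i$); and $\hat y=\mathrm{softmax}(W''Z''_m)\in\mathbb{R}^{|V|}$, where $Z''_m$ is the $m$-th row of $Z''$ viewed as a column vector. Let $L_{\mathrm{MLM}}(m,b)=-\log \hat y_b$ be the masked-language-modeling (cross-entropy) loss. Then there exist $g\in\mathbb{R}^{|V|}$, $D\in\mathbb{R}^{|V|\times S}$, $W^{LOV}\in\mathbb{R}^{|V|\times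 p}$ and $W^{KQ}\in\mathbb{R}^{p\times p}$, determined by the parameters $C,P,W^V,W^Q,W^K,W^O,W',W''$ alone (not depending on $\overline{X}$, $m$ or $b$), such that for every such $\overline{X},m,b$, \[ L_{\mathrm{MLM}}(m,b) = - \frac{\sum_{j=1}^S\theta(j,m)\chi(j,m,b) }{\sum_{j=1}^S \theta(j,m)} +\log\left( \sum_{k=1}^{|V|} \exp\left( \frac{\sum_{j=1}^S\theta(j,m)\chi(j,m,k) }{\sum_{j=1}^S \theta(j,m)} \right)\right), \] where \[ \theta(j,m) = \exp\left(\frac{ e_j^\top (\overline{X} C+P) W^{KQ} (c_{|V|+1} + P^\top e_m)}{\sqrt{d_w}} \right),\qquad \chi(j,m,k) = \left( W^{LOV} (\overline{X} C+P)^\top e_j + g + D e_m \right)_k, \] and $e_j\in\{0,1\}^S$ denotes the $j$-th standard basis vector.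
   Context: $\mathrm{softmax}$ of a vector $v$ is the vector with entries $e^{v_k}/\sum_l e^{v_l}$; $(v)_k$ denotes the $k$-th entry of a vector $v$; $[n]=\{1,\dots,n\}$. *)

theory Defs
  imports Complex_Main
begin

text \<open>Matrices are functions nat => nat => real, indexed from 0, with explicit
  dimension bounds.  Token indices 0..nV-1 are ordinary tokens,
  index nV is the MASK token.  A matrix M in R^(r x c) is read as M i l with
  i < r, l < c.\<close>

definition softmax :: "nat \<Rightarrow> (nat \<Rightarrow> real) \<Rightarrow> nat \<Rightarrow> real" where
  "softmax n v k = exp (v k) / (\<Sum>l<n. exp (v l))"

definition Xp :: "nat \<Rightarrow> nat \<Rightarrow> nat \<Rightarrow> (nat \<Rightarrow> nat \<Rightarrow> real) \<Rightarrow> (nat \<Rightarrow> nat \<Rightarrow> real)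
    \<Rightarrow> (nat \<Rightarrow> nat \<Rightarrow> real) \<Rightarrow> nat \<Rightarrow> nat \<Rightarrow> real" where
  "Xp nV S p C P Xbar i l = (\<Sum>t<nV+1. Xbar i t * C t l) + P i l"

definition att_score :: "nat \<Rightarrow> nat \<Rightarrow> (nat \<Rightarrow> nat \<Rightarrow> real) \<Rightarrow> (nat \<Rightarrow> nat \<Rightarrow> real)
    \<Rightarrow> (nat \<Rightarrow> nat \<Rightarrow> real) \<Rightarrow> nat \<Rightarrow> nat \<Rightarrow> real" where
  "att_score p dw WQ WK X i j =
     (\<Sum>a<dw. (\<Sum>l<p. X i l * WQ a l) * (\<Sum>l<p. X j l * WK a l)) / sqrt (real dw)"

definition Xattn :: "nat \<Rightarrow> nat \<Rightarrow> nat \<Rightarrow> nat \<Rightarrow> (nat \<Rightarrow> nat \<Rightarrow> real) \<Rightarrow> (nat \<Rightarrow> nat \<Rightarrow> real)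
    \<Rightarrow> (nat \<Rightarrow> nat \<Rightarrow> real) \<Rightarrow> (nat \<Rightarrow> nat \<Rightarrow> real) \<Rightarrow> nat \<Rightarrow> nat \<Rightarrow> real" where
  "Xattn S p d dw WV WQ WK X i a =
     (\<Sum>j<S. softmax S (att_score p dw WQ WK X i) j * (\<Sum>l<p. X j l * WV a l))"

definition mlm_loss :: "nat \<Rightarrow> nat \<Rightarrow> nat \<Rightarrow> nat \<Rightarrow> nat
    \<Rightarrow> (nat \<Rightarrow> nat \<Rightarrow> real) \<Rightarrow> (nat \<Rightarrow> nat \<Rightarrow> real) \<Rightarrow> (nat \<Rightarrow> nat \<Rightarrow> real)
    \<Rightarrow> (nat \<Rightarrow> nat \<Rightarrow> real) \<Rightarrow> (nat \<Rightarrow> nat \<Rightarrow> real) \<Rightarrow> (nat \<Rightarrow> nat \<Rightarrow> real)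
    \<Rightarrow> (nat \<Rightarrow> nat \<Rightarrow> real) \<Rightarrow> (nat \<Rightarrow> nat \<Rightarrow> real)
    \<Rightarrow> (nat \<Rightarrow> nat \<Rightarrow> real) \<Rightarrow> nat \<Rightarrow> nat \<Rightarrow> real" where
  "mlm_loss nV S p d dw C P WV WQ WK WO W1 W2 Xbar m b =
    (let X = Xp nV S p C P Xbar;
         XA = Xattn S p d dw WV WQ WK X;
         Z = (\<lambda>i l. \<Sum>a<d. XA i a * WO a l);
         Z1 = (\<lambda>i l. X i l + Z i l);
         Z2 = (\<lambda>i l. Z1 i l + (\<Sum>l'<p. W1 l l' * Z1 i l'));
         logits = (\<lambda>k. \<Sum>l<p. W2 k l * Z2 m l)
     in - ln (softmax nV logits b))"

definition masked_input :: "nat \<Rightarrow> nat \<Rightarrow> (nat \<Rightarrow> nat \<Rightarrow> real) \<Rightarrow> nat \<Rightarrow> nat \<Rightarrow> bool" where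
  "masked_input nV S Xbar m b \<longleftrightarrow>
     (\<forall>i<S. \<exists>t<nV+1. \<forall>u<nV+1. Xbar i u = (if u = t then 1 else 0)) \<and>
     m < S \<and> (\<forall>u<nV+1. Xbar m u = (if u = nV then 1 else 0)) \<and> b < nV"

end

theory Submission
  imports Defs
begin

text \<open>The masked row of X' is c_MASK + P_m, so row m of the attention output is a softmax
  average of the value vectors W^V X'_j with weights exp of the bilinear form
  X'_j^T (W^K)^T W^Q X'_m, which is theta(j, m).  Everything downstream of attention is
  linear in Z'_m = X'_m + (W^O)^T (attention row), so the logits are W''(I + W') X'_m
  plus the average of W''(I + W')(W^O)^T W^V X'_j; as the weights sum to one, the
  constant part moves inside the average.  Finally -log softmax_b = -logit_b + log sum exp.\<close>

lemma sum_mult_sum_assoc: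
  fixes u v :: "nat \<Rightarrow> 'a::comm_semiring_0" and A :: "nat \<Rightarrow> nat \<Rightarrow> 'a"
  shows "(\<Sum>i<n. u i * (\<Sum>j<m. A i j * v j)) = (\<Sum>j<m. (\<Sum>i<n. u i * A i j) * v j)"
  by (simp add: sum_distrib_left sum_distrib_right mult.assoc) (rule sum.swap)

lemma sum_mult_sum_swap:
  fixes u v :: "nat \<Rightarrow> 'a::comm_semiring_0" and A :: "nat \<Rightarrow> nat \<Rightarrow> 'a"
  shows "(\<Sum>i<n. u i * (\<Sum>j<m. v j * A j i)) = (\<Sum>j<m. v j * (\<Sum>i<n. u i * A j i))"
  by (simp add: sum_distrib_left mult.left_commute) (rule sum.swap)

lemma sum_product_linear_forms:
  fixes x y :: "nat \<Rightarrow> 'a::comm_semiring_0" and A B :: "nat \<Rightarrow> nat \<Rightarrow> 'a"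
  shows "(\<Sum>a<r. (\<Sum>l<p. y l * A a l) * (\<Sum>l<p. x l * B a l)) =
         (\<Sum>l<p. \<Sum>l'<p. x l * (\<Sum>a<r. B a l * A a l') * y l')"
  by (simp add: sum_product sum_distrib_left sum_distrib_right mult_ac sum.swap[of _ "{..<r}"],
      rule sum.cong[OF refl], subst sum.swap, simp add: mult_ac)

lemma sum_softmax:
  assumes "0 < n"
  shows "(\<Sum>j<n. softmax n v j) = 1"
proof -
  have "(\<Sum>k<n. exp (v k)) > 0"
    using assms by (intro sum_pos) auto
  then show ?thesis
    unfolding softmax_def by (simp flip: sum_divide_distrib)
qed

lemma sum_weights_one_add:
  fixes s f :: "nat \<Rightarrow> 'a::comm_ring_1"
  assumes "(\<Sum>j<n. s j) = 1"
  shows "c + (\<Sum>j<n. s j * f j) = (\<Sum>j<n. s j * (f j + c))"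
  using assms by (simp add: distrib_left sum.distrib flip: sum_distrib_right)

lemma neg_ln_softmax:
  assumes "0 < n"
  shows "- ln (softmax n v b) = - v b + ln (\<Sum>k<n. exp (v k))"
proof -
  have "(\<Sum>k<n. exp (v k)) > 0"
    using assms by (intro sum_pos) auto
  then show ?thesis
    unfolding softmax_def by (simp add: ln_div)
qed

lemma Xp_one_hot_row:
  assumes "t < nV + 1" and "\<forall>u<nV + 1. Xbar i u = (if u = t then 1 else 0)"
  shows "Xp nV S p C P Xbar i l = C t l + P i l"
proof -
  have "(\<Sum>u<nV + 1. Xbar i u * C u l) = (\<Sum>u<nV + 1. if u = t then C u l else 0)"
    using assms(2) by (intro sum.cong) auto
  then show ?thesis
    unfolding Xp_def using assms(1) by simp
qed

text \<open>In the paper's notation: kq_matrix is W^KQ = (W^K)^T W^Q, head_matrix is W''(I + W'),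
  and lov_matrix is W^LOV = W''(I + W')(W^O)^T W^V.\<close>

definition kq_matrix ::
    "nat \<Rightarrow> (nat \<Rightarrow> nat \<Rightarrow> real) \<Rightarrow> (nat \<Rightarrow> nat \<Rightarrow> real) \<Rightarrow> nat \<Rightarrow> nat \<Rightarrow> real"
  where "kq_matrix dw WQ WK l l' = (\<Sum>a<dw. WK a l * WQ a l')"

definition head_matrix ::
    "nat \<Rightarrow> (nat \<Rightarrow> nat \<Rightarrow> real) \<Rightarrow> (nat \<Rightarrow> nat \<Rightarrow> real) \<Rightarrow> nat \<Rightarrow> nat \<Rightarrow> real"
  where "head_matrix p W1 W2 k l = W2 k l + (\<Sum>l0<p. W2 k l0 * W1 l0 l)"

definition lov_matrix :: "nat \<Rightarrow> nat \<Rightarrow> (nat \<Rightarrow> nat \<Rightarrow> real) \<Rightarrow> (nat \<Rightarrow> nat \<Rightarrow> real)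
    \<Rightarrow> (nat \<Rightarrow> nat \<Rightarrow> real) \<Rightarrow> (nat \<Rightarrow> nat \<Rightarrow> real) \<Rightarrow> nat \<Rightarrow> nat \<Rightarrow> real"
  where "lov_matrix p d WV WO W1 W2 k l' =
    (\<Sum>l<p. head_matrix p W1 W2 k l * (\<Sum>a<d. WV a l' * WO a l))"

lemma att_score_eq_kq_matrix:
  "att_score p dw WQ WK X i j =
    (\<Sum>l<p. \<Sum>l'<p. X j l * kq_matrix dw WQ WK l l' * X i l') / sqrt (real dw)"
  unfolding att_score_def kq_matrix_def by (simp only: sum_product_linear_forms)

lemma residual_head_eq:
  fixes z :: "nat \<Rightarrow> real"
  shows "(\<Sum>l<p. W2 k l * (z l + (\<Sum>l'<p. W1 l l' * z l'))) =
    (\<Sum>l<p. head_matrix p W1 W2 k l * z l)"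
  unfolding head_matrix_def
  by (simp add: sum_mult_sum_assoc distrib_left distrib_right sum.distrib)

lemma head_of_value_average:
  fixes w :: "nat \<Rightarrow> real" and X :: "nat \<Rightarrow> nat \<Rightarrow> real"
  shows "(\<Sum>l<p. head_matrix p W1 W2 k l *
            (\<Sum>a<d. (\<Sum>j<S. w j * (\<Sum>l'<p. X j l' * WV a l')) * WO a l)) =
    (\<Sum>j<S. w j * (\<Sum>l'<p. lov_matrix p d WV WO W1 W2 k l' * X j l'))"
proof -
  let ?H = "head_matrix p W1 W2 k"
  have value_output: "(\<Sum>a<d. (\<Sum>j<S. w j * (\<Sum>l'<p. X j l' * WV a l')) * WO a l) =
      (\<Sum>j<S. w j * (\<Sum>l'<p. X j l' * (\<Sum>a<d. WV a l' * WO a l)))" for l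
    by (simp only: sum_mult_sum_assoc[symmetric])
  have "(\<Sum>l<p. ?H l * (\<Sum>a<d. (\<Sum>j<S. w j * (\<Sum>l'<p. X j l' * WV a l')) * WO a l)) =
      (\<Sum>j<S. w j * (\<Sum>l<p. ?H l * (\<Sum>l'<p. X j l' * (\<Sum>a<d. WV a l' * WO a l))))"
    unfolding value_output by (rule sum_mult_sum_swap)
  also have "\<dots> = (\<Sum>j<S. w j * (\<Sum>l'<p. X j l' * (\<Sum>l<p. ?H l * (\<Sum>a<d. WV a l' * WO a l))))"
    by (rule sum.cong[OF refl], subst sum_mult_sum_swap, rule refl)
  finally show ?thesis
    unfolding lov_matrix_def by (simp add: mult.commute)
qed

lemma mlm_loss_masked_eq:
  fixes p d dw :: nat and C P WV WQ WK WO W1 W2 :: "nat \<Rightarrow> nat \<Rightarrow> real"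
  assumes "masked_input nV S Xbar m b"
  defines "X \<equiv> Xp nV S p C P Xbar"
  defines "\<theta> \<equiv> \<lambda>j. exp ((\<Sum>l<p. \<Sum>l'<p. X j l * kq_matrix dw WQ WK l l' * (C nV l' + P m l'))
                        / sqrt (real dw))"
    and "\<chi> \<equiv> \<lambda>j k. (\<Sum>l<p. lov_matrix p d WV WO W1 W2 k l * X j l)
                 + (\<Sum>l<p. head_matrix p W1 W2 k l * C nV l)
                 + (\<Sum>l<p. head_matrix p W1 W2 k l * P m l)"
  shows "mlm_loss nV S p d dw C P WV WQ WK WO W1 W2 Xbar m b =
    - ((\<Sum>j<S. \<theta> j * \<chi> j b) / (\<Sum>j<S. \<theta> j))
    + ln (\<Sum>k<nV. exp ((\<Sum>j<S. \<theta> j * \<chi> j k) / (\<Sum>j<S. \<theta> j)))"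
proof -
  have "m < S" "0 < nV" and mask_row: "\<forall>u<nV + 1. Xbar m u = (if u = nV then 1 else 0)"
    using assms(1) unfolding masked_input_def by auto
  have X_m: "X m l = C nV l + P m l" for l
    unfolding X_def using mask_row by (intro Xp_one_hot_row) auto
  have weights: "exp (att_score p dw WQ WK X m j) = \<theta> j" for j
    unfolding att_score_eq_kq_matrix \<theta>_def X_m ..
  define s where "s = softmax S (att_score p dw WQ WK X m)"
  have s_eq: "s j = \<theta> j / (\<Sum>j<S. \<theta> j)" for j
    unfolding s_def softmax_def weights ..
  have "(\<Sum>j<S. s j) = 1"
    unfolding s_def using \<open>m < S\<close> by (intro sum_softmax) auto
  define Z where "Z l = X m l + (\<Sum>a<d. Xattn S p d dw WV WQ WK X m a * WO a l)" for l
  have logit: "(\<Sum>l<p. W2 k l * (Z l + (\<Sum>l'<p. W1 l l' * Z l'))) =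
      (\<Sum>j<S. \<theta> j * \<chi> j k) / (\<Sum>j<S. \<theta> j)" for k
  proof -
    have "(\<Sum>l<p. W2 k l * (Z l + (\<Sum>l'<p. W1 l l' * Z l'))) =
        (\<Sum>l<p. head_matrix p W1 W2 k l * Z l)"
      by (rule residual_head_eq)
    also have "\<dots> = (\<Sum>l<p. head_matrix p W1 W2 k l * X m l)
        + (\<Sum>j<S. s j * (\<Sum>l<p. lov_matrix p d WV WO W1 W2 k l * X j l))"
      unfolding Z_def Xattn_def s_def[symmetric] head_of_value_average[symmetric]
      by (simp add: distrib_left sum.distrib)
    also have "\<dots> = (\<Sum>j<S. s j * \<chi> j k)"
      unfolding sum_weights_one_add[OF \<open>(\<Sum>j<S. s j) = 1\<close>] \<chi>_def X_m
      by (simp add: distrib_left sum.distrib add.assoc)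
    also have "\<dots> = (\<Sum>j<S. \<theta> j * \<chi> j k) / (\<Sum>j<S. \<theta> j)"
      unfolding s_eq by (simp add: sum_divide_distrib)
    finally show ?thesis .
  qed
  have "mlm_loss nV S p d dw C P WV WQ WK WO W1 W2 Xbar m b =
      - ln (softmax nV (\<lambda>k. \<Sum>l<p. W2 k l * (Z l + (\<Sum>l'<p. W1 l l' * Z l'))) b)"
    unfolding mlm_loss_def X_def[symmetric] Let_def Z_def by simp
  then show ?thesis
    unfolding logit neg_ln_softmax[OF \<open>0 < nV\<close>] .
qed

theorem lemma1:
  fixes nV S p d dw :: nat
    and C P WV WQ WK WO W1 W2 :: "nat \<Rightarrow> nat \<Rightarrow> real"
  assumes "0 < nV" "0 < S" "0 < p" "0 < d" "0 < dw"
  shows "\<exists>(g :: nat \<Rightarrow> real) (D :: nat \<Rightarrow> nat \<Rightarrow> real) (WLOV :: nat \<Rightarrow> nat \<Rightarrow> real)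
            (WKQ :: nat \<Rightarrow> nat \<Rightarrow> real).
    \<forall>Xbar m b. masked_input nV S Xbar m b \<longrightarrow>
      (let X = Xp nV S p C P Xbar;
           \<theta> = (\<lambda>j. exp ((\<Sum>l<p. \<Sum>l'<p. X j l * WKQ l l' * (C nV l' + P m l')) / sqrt (real dw)));
           \<chi> = (\<lambda>j k. (\<Sum>l<p. WLOV k l * X j l) + g k + D k m)
       in mlm_loss nV S p d dw C P WV WQ WK WO W1 W2 Xbar m b =
          - ((\<Sum>j<S. \<theta> j * \<chi> j b) / (\<Sum>j<S. \<theta> j))
          + ln (\<Sum>k<nV. exp ((\<Sum>j<S. \<theta> j * \<chi> j k) / (\<Sum>j<S. \<theta> j))))"
  unfolding Let_def
  by (rule exI[of _ "\<lambda>k. \<Sum>l<p. head_matrix p W1 W2 k l * C nV l"],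
      rule exI[of _ "\<lambda>k m. \<Sum>l<p. head_matrix p W1 W2 k l * P m l"],
      rule exI[of _ "lov_matrix p d WV WO W1 W2"], rule exI[of _ "kq_matrix dw WQ WK"])
    (intro allI impI mlm_loss_masked_eq)

end
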